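(* Let $\mathcal X,\mathcal Y$ be finite, $q:\mathcal X\times\mathcal Y\to\mathbb R$, $P_{X_1}$ a pmf on $\mathcal X$, and $W,V$ conditional pmfs on $\mathcal Y$ given $\mathcal X$. For conditional pmfs $P_{Y\hat Y|X_1}$ (on $\mathcal Y\times\mathcal Y$ given $\mathcal X$) and $P_{X_2|X_1\hat Y}$ (on $\mathcal X$ given $\mathcal X\times\mathcal Y$), let $\mathbb E[q(X_2,Y)]=\sum_{x_1,x_2,y,\hat y}q(x_2,y)P_{X_1}(x_1)P_{Y\hat Y|X_1}(y,\hat y|x_1)P_{X_2|X_1\hat Y}(x_2|\hat y,x_1)$. Let $\mathcal A$ be the set of $P_{Y\hat Y|X_1}$ with $P_{Y|X_1}=W$ and $P_{\hat Y|X_1}=V$, and $\mathcal B$ the set of $P_{X_2|X_1\hat Y}$ such that, under the joint law $P_{X_1}(x_1)V(\hat y|x_1)P_{X_2|X_1\hat Y}(x_2|\hat y,x_1)$, $P_{\hat YX_2}=P_{\hat YX_1}$. Then $$\max_{P_{Y\hat Y|X_1}\in\mathcal A}\ \min_{P_{X_2|X_1\hat Y}\in\mathcal B}\mathbb E[q(X_2,Y)]=\min_{P_{X_2|X_1\hat Y}\in\mathcal B}\ \max_{P_{Y\hat Y|X_1}\in\mathcal A}\mathbb E[q(X_2,Y)].$$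
   Context: $P_{Y|X_1}$ and $P_{\hat Y|X_1}$ denote the two marginal conditionals of $P_{Y\hat Y|X_1}$. The joint law of $(X_1,Y,\hat Y,X_2)$ is $P_{X_1}P_{Y\hat Y|X_1}P_{X_2|X_1\hat Y}$, so that $X_2-(X_1,\hat Y)-Y$ is a Markov chain. *)

theory Defs
  imports "HOL-Analysis.Analysis"
begin

definition is_pmf :: "('a::finite \<Rightarrow> real) \<Rightarrow> bool" where
  "is_pmf p \<longleftrightarrow> (\<forall>a. 0 \<le> p a) \<and> (\<Sum>a\<in>UNIV. p a) = 1"

(* A conditional pmf: K c is a pmf for every conditioning value c. K c a = K(a|c). *)
definition is_cond_pmf :: "('c \<Rightarrow> 'a::finite \<Rightarrow> real) \<Rightarrow> bool" where
  "is_cond_pmf K \<longleftrightarrow> (\<forall>c. is_pmf (K c))"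

(* E[q(X2,Y)] with X1 ~ P1, (Y,Yhat)|X1 ~ PYY, X2|(X1,Yhat) ~ PX2.
   PYY x1 y yh = P(y,yh|x1);  PX2 x1 yh x2 = P(x2|yh,x1). *)
definition expq ::
  "('x::finite \<Rightarrow> 'y::finite \<Rightarrow> real) \<Rightarrow> ('x \<Rightarrow> real)
   \<Rightarrow> ('x \<Rightarrow> 'y \<Rightarrow> 'y \<Rightarrow> real) \<Rightarrow> ('x \<Rightarrow> 'y \<Rightarrow> 'x \<Rightarrow> real) \<Rightarrow> real" where
  "expq q P1 PYY PX2 =
     (\<Sum>x1\<in>UNIV. \<Sum>x2\<in>UNIV. \<Sum>y\<in>UNIV. \<Sum>yh\<in>UNIV.
        q x2 y * P1 x1 * PYY x1 y yh * PX2 x1 yh x2)"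

(* The set A: couplings of W and V given X1. W x y = W(y|x), V x yh = V(yh|x). *)
definition setA ::
  "('x::finite \<Rightarrow> 'y::finite \<Rightarrow> real) \<Rightarrow> ('x \<Rightarrow> 'y \<Rightarrow> real)
   \<Rightarrow> ('x \<Rightarrow> 'y \<Rightarrow> 'y \<Rightarrow> real) set" where
  "setA W V = {PYY. is_cond_pmf (\<lambda>x1 (y, yh). PYY x1 y yh) \<and>
                    (\<forall>x1 y. (\<Sum>yh\<in>UNIV. PYY x1 y yh) = W x1 y) \<and>
                    (\<forall>x1 yh. (\<Sum>y\<in>UNIV. PYY x1 y yh) = V x1 yh)}"

definition setB ::
  "('x::finite \<Rightarrow> real) \<Rightarrow> ('x \<Rightarrow> 'y::finite \<Rightarrow> real)
   \<Rightarrow> ('x \<Rightarrow> 'y \<Rightarrow> 'x \<Rightarrow> real) set" where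
  "setB P1 V = {PX2. is_cond_pmf (\<lambda>(x1, yh). PX2 x1 yh) \<and>
                    (\<forall>yh x. (\<Sum>x1\<in>UNIV. P1 x1 * V x1 yh * PX2 x1 yh x) = P1 x * V x yh)}"

end

theory Submission
  imports Defs
begin

text \<open>
  The expected payoff is bilinear in the two conditional pmfs, and \<open>setA\<close>, \<open>setB\<close> are
  compact convex sets of conditional pmfs, so the statement is an instance of a minimax theorem
  of Ky Fan type (concave-like in the first, convex-like in the second argument).

  Its key step: if every \<open>b\<close> is beaten by some \<open>a\<close>, i.e. \<open>c < f a b\<close>, then by
  compactness finitely many \<open>a\<close> suffice, and one mixture of them beats every \<open>b\<close> at once.
  The mixture weights are the positive parts \<open>max 0 (f a b\<^sub>0 - c)\<close> at a minimiser
  \<open>b\<^sub>0\<close> of the penalty \<open>\<Sum>a. (max 0 (f a b - c))\<^sup>2\<close>; convex-likeness in \<open>b\<close> turns the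
  minimality of \<open>b\<^sub>0\<close> into the first-order condition that makes this mixture work.
  A finite-intersection argument lets \<open>c\<close> reach the value \<open>INF b. SUP a. f a b\<close>, and the
  same argument with the roles of the players exchanged yields a saddle point.
\<close>

section \<open>A minimax theorem for concave-like/convex-like functions\<close>

definition concavelike_on :: "'a set \<Rightarrow> 'b set \<Rightarrow> ('a \<Rightarrow> 'b \<Rightarrow> real) \<Rightarrow> bool" where
  "concavelike_on A B f \<longleftrightarrow>
     (\<forall>a0\<in>A. \<forall>a1\<in>A. \<forall>t. 0 \<le> t \<and> t \<le> 1 \<longrightarrow>
        (\<exists>a\<in>A. \<forall>b\<in>B. (1 - t) * f a0 b + t * f a1 b \<le> f a b))"

definition convexlike_on :: "'a set \<Rightarrow> 'b set \<Rightarrow> ('a \<Rightarrow> 'b \<Rightarrow> real) \<Rightarrow> bool" where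
  "convexlike_on A B f \<longleftrightarrow>
     (\<forall>b0\<in>B. \<forall>b1\<in>B. \<forall>t. 0 \<le> t \<and> t \<le> 1 \<longrightarrow>
        (\<exists>b\<in>B. \<forall>a\<in>A. f a b \<le> (1 - t) * f a b0 + t * f a b1))"

lemma convexlike_on_iff_concavelike_on_uminus:
  "convexlike_on A B f \<longleftrightarrow> concavelike_on B A (\<lambda>b a. - f a b)"
  unfolding convexlike_on_def concavelike_on_def by (simp add: algebra_simps)

lemma concavelike_onD:
  assumes "concavelike_on A B f" "a0 \<in> A" "a1 \<in> A" "0 \<le> t" "t \<le> 1"
  obtains a where "a \<in> A" "\<And>b. b \<in> B \<Longrightarrow> (1 - t) * f a0 b + t * f a1 b \<le> f a b"
  using assms unfolding concavelike_on_def by blast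

lemma convexlike_onD:
  assumes "convexlike_on A B f" "b0 \<in> B" "b1 \<in> B" "0 \<le> t" "t \<le> 1"
  obtains b where "b \<in> B" "\<And>a. a \<in> A \<Longrightarrow> f a b \<le> (1 - t) * f a b0 + t * f a b1"
  using assms unfolding convexlike_on_def by blast

lemma concavelike_on_sum:
  assumes "concavelike_on A B f" "finite F" "F \<noteq> {}" "F \<subseteq> A"
    and "\<And>i. i \<in> F \<Longrightarrow> 0 \<le> w i" "sum w F = 1"
  shows "\<exists>a\<in>A. \<forall>b\<in>B. (\<Sum>i\<in>F. w i * f i b) \<le> f a b"
  using assms(2-6)
proof (induction F arbitrary: w rule: finite_ne_induct)
  case (singleton x)
  then show ?case by auto
next
  case (insert x F)
  define s where "s = sum w F"
  have wx: "w x = 1 - s" using insert.prems insert.hyps unfolding s_def by simp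
  have "0 \<le> w x" using insert.prems by simp
  then have s: "0 \<le> s" "s \<le> 1"
    using insert.prems wx unfolding s_def by (auto intro: sum_nonneg)
  show ?case
  proof (cases "s = 0")
    case True
    then have "\<forall>i\<in>F. w i = 0"
      using insert.prems insert.hyps(1) unfolding s_def by (subst (asm) sum_nonneg_eq_0_iff) auto
    then show ?thesis using insert.prems insert.hyps wx True by (intro bexI[of _ x]) auto
  next
    case False
    then have "0 < s" using s by simp
    obtain a' where a': "a' \<in> A" "\<And>b. b \<in> B \<Longrightarrow> (\<Sum>i\<in>F. w i / s * f i b) \<le> f a' b"
      using insert.IH[of "\<lambda>i. w i / s"] insert.prems \<open>0 < s\<close>
      by (auto simp: s_def sum_divide_distrib[symmetric])
    obtain a where a: "a \<in> A" "\<And>b. b \<in> B \<Longrightarrow> (1 - s) * f x b + s * f a' b \<le> f a b"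
      by (rule concavelike_onD[OF assms(1) _ a'(1) s(1,2)]) (use insert.prems in auto)
    show ?thesis
    proof (intro bexI[OF _ a(1)] ballI)
      fix b assume "b \<in> B"
      have "(\<Sum>i\<in>insert x F. w i * f i b) = (1 - s) * f x b + s * (\<Sum>i\<in>F. w i / s * f i b)"
        using insert.hyps \<open>0 < s\<close> wx by (simp add: sum_distrib_left)
      also have "\<dots> \<le> (1 - s) * f x b + s * f a' b"
        using a'(2)[OF \<open>b \<in> B\<close>] \<open>0 < s\<close> by simp
      also have "\<dots> \<le> f a b" using a(2)[OF \<open>b \<in> B\<close>] .
      finally show "(\<Sum>i\<in>insert x F. w i * f i b) \<le> f a b" .
    qed
  qed
qed

lemma power2_max_0_mono:
  fixes x y :: real
  shows "x \<le> y \<Longrightarrow> (max 0 x)\<^sup>2 \<le> (max 0 y)\<^sup>2"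
  by (intro power_mono) auto

lemma power2_max_0_add_le:
  fixes x h :: real
  shows "(max 0 (x + h))\<^sup>2 \<le> (max 0 x)\<^sup>2 + 2 * max 0 x * h + h\<^sup>2"
proof (cases "x + h \<le> 0")
  case True
  have "0 \<le> (max 0 x + h)\<^sup>2" by simp
  then show ?thesis using True by (simp add: power2_eq_square algebra_simps)
next
  case False
  show ?thesis
  proof (cases "0 \<le> x")
    case True
    then show ?thesis using False by (simp add: power2_eq_square algebra_simps)
  next
    case False
    with \<open>\<not> x + h \<le> 0\<close> have "(x + h)\<^sup>2 \<le> h\<^sup>2" by (intro power_mono) auto
    then show ?thesis using \<open>\<not> x + h \<le> 0\<close> False by simp
  qed
qed

text \<open>The penalty \<open>\<Sum>a\<in>F. (max 0 (u a))\<^sup>2\<close> is differentiable in \<open>u\<close> with gradient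
  \<open>2 * max 0 (u a)\<close>; this is its first-order optimality condition along \<open>d\<close>.\<close>

lemma sum_power2_max_0_first_order:
  fixes u d :: "'a \<Rightarrow> real"
  assumes min: "\<And>t. 0 < t \<Longrightarrow> t \<le> 1 \<Longrightarrow>
      (\<Sum>a\<in>F. (max 0 (u a))\<^sup>2) \<le> (\<Sum>a\<in>F. (max 0 (u a + t * d a))\<^sup>2)"
  shows "0 \<le> (\<Sum>a\<in>F. max 0 (u a) * d a)"
proof (rule ccontr)
  define D where "D = (\<Sum>a\<in>F. max 0 (u a) * d a)"
  define Q where "Q = (\<Sum>a\<in>F. (d a)\<^sup>2)"
  assume "\<not> 0 \<le> (\<Sum>a\<in>F. max 0 (u a) * d a)"
  then have D: "D < 0" unfolding D_def by simp
  have Q: "0 \<le> Q" unfolding Q_def by (intro sum_nonneg) auto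
  define t where "t = min 1 (- D / (Q + 1))"
  have t: "0 < t" "t \<le> 1" using D Q unfolding t_def by (auto simp: divide_neg_pos)
  have "(\<Sum>a\<in>F. (max 0 (u a + t * d a))\<^sup>2)
      \<le> (\<Sum>a\<in>F. (max 0 (u a))\<^sup>2 + 2 * max 0 (u a) * (t * d a) + (t * d a)\<^sup>2)"
    by (intro sum_mono power2_max_0_add_le)
  also have "\<dots> = (\<Sum>a\<in>F. (max 0 (u a))\<^sup>2) + 2 * t * D + t\<^sup>2 * Q"
    unfolding D_def Q_def
    by (simp add: sum.distrib sum_distrib_left power_mult_distrib mult_ac)
  finally have upper: "(\<Sum>a\<in>F. (max 0 (u a + t * d a))\<^sup>2)
      \<le> (\<Sum>a\<in>F. (max 0 (u a))\<^sup>2) + 2 * t * D + t\<^sup>2 * Q" .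
  have "t * Q \<le> - D / (Q + 1) * Q" using Q unfolding t_def by (intro mult_right_mono) auto
  also have "\<dots> \<le> - D" using D Q by (simp add: field_simps)
  finally have "t * (t * Q) \<le> t * (- D)" using t by (intro mult_left_mono) auto
  then have "t\<^sup>2 * Q \<le> t * (- D)" by (simp add: power2_eq_square mult.assoc)
  moreover have "t * D < 0" using t D by (simp add: mult_pos_neg)
  ultimately show False using upper min[OF t] by linarith
qed

lemma compact_finite_subcover_gt:
  fixes f :: "'a \<Rightarrow> 'b::topological_space \<Rightarrow> real"
  assumes "compact B"
    and cont: "\<And>a. a \<in> A \<Longrightarrow> continuous_on B (f a)"
    and cover: "\<And>b. b \<in> B \<Longrightarrow> \<exists>a\<in>A. c < f a b"
  obtains F where "F \<subseteq> A" "finite F" "\<And>b. b \<in> B \<Longrightarrow> \<exists>a\<in>F. c < f a b"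
proof -
  have "\<exists>U. open U \<and> U \<inter> B = f a -` {c<..} \<inter> B" if "a \<in> A" for a
    using cont[OF that] unfolding continuous_on_open_invariant by auto
  then obtain U where U: "\<And>a. a \<in> A \<Longrightarrow> open (U a) \<and> U a \<inter> B = f a -` {c<..} \<inter> B"
    by metis
  have "B \<subseteq> (\<Union>a\<in>A. U a)" using cover U by blast
  then obtain F where F: "F \<subseteq> A" "finite F" "B \<subseteq> (\<Union>a\<in>F. U a)"
    using compactE_image[OF \<open>compact B\<close>, of A U] U by blast
  have "\<exists>a\<in>F. c < f a b" if "b \<in> B" for b
    using F U that by blast
  with F show thesis using that by blast
qed

lemma concavelike_convexlike_uniform_gt:
  fixes f :: "'a \<Rightarrow> 'b::topological_space \<Rightarrow> real"
  assumes B: "compact B" "B \<noteq> {}"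
    and cont: "\<And>a. a \<in> A \<Longrightarrow> continuous_on B (f a)"
    and concave: "concavelike_on A B f" and convex: "convexlike_on A B f"
    and cover: "\<And>b. b \<in> B \<Longrightarrow> \<exists>a\<in>A. c < f a b"
  shows "\<exists>a\<in>A. \<forall>b\<in>B. c < f a b"
proof -
  obtain F where F: "F \<subseteq> A" "finite F" "\<And>b. b \<in> B \<Longrightarrow> \<exists>a\<in>F. c < f a b"
    using compact_finite_subcover_gt[OF B(1) cont cover] by blast
  define penalty where "penalty b = (\<Sum>a\<in>F. (max 0 (f a b - c))\<^sup>2)" for b
  have "continuous_on B penalty"
    unfolding penalty_def using cont F(1) by (intro continuous_intros) auto
  then obtain b0 where b0: "b0 \<in> B" "\<And>b. b \<in> B \<Longrightarrow> penalty b0 \<le> penalty b"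
    using continuous_attains_inf[OF B] by blast
  define w where "w a = max 0 (f a b0 - c)" for a
  have first_order: "0 \<le> (\<Sum>a\<in>F. w a * (f a b - f a b0))" if "b \<in> B" for b
    unfolding w_def
  proof (rule sum_power2_max_0_first_order)
    fix t :: real assume t: "0 < t" "t \<le> 1"
    obtain b' where b': "b' \<in> B" "\<And>a. a \<in> A \<Longrightarrow> f a b' \<le> (1 - t) * f a b0 + t * f a b"
      by (rule convexlike_onD[OF convex b0(1) \<open>b \<in> B\<close>]) (use t in auto)
    have "penalty b0 \<le> penalty b'" using b0(2)[OF b'(1)] .
    also have "\<dots> \<le> (\<Sum>a\<in>F. (max 0 (f a b0 - c + t * (f a b - f a b0)))\<^sup>2)"
      unfolding penalty_def using F(1) b'(2)
      by (intro sum_mono power2_max_0_mono) (auto simp: algebra_simps)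
    finally show "(\<Sum>a\<in>F. (max 0 (f a b0 - c))\<^sup>2)
        \<le> (\<Sum>a\<in>F. (max 0 (f a b0 - c + t * (f a b - f a b0)))\<^sup>2)"
      unfolding penalty_def .
  qed
  obtain a1 where a1: "a1 \<in> F" "c < f a1 b0" using F(3)[OF b0(1)] by blast
  have w_nonneg: "\<And>a. 0 \<le> w a" unfolding w_def by simp
  have "0 < w a1" using a1 unfolding w_def by simp
  then have sum_w: "0 < sum w F" "0 < (\<Sum>a\<in>F. (w a)\<^sup>2)"
    using a1(1) w_nonneg F(2) by (auto intro!: sum_pos2[of F a1])
  obtain a where a: "a \<in> A" "\<And>b. b \<in> B \<Longrightarrow> (\<Sum>i\<in>F. w i / sum w F * f i b) \<le> f a b"
    using concavelike_on_sum[OF concave F(2) _ F(1), of "\<lambda>i. w i / sum w F"]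
      a1(1) w_nonneg sum_w by (auto simp: sum_divide_distrib[symmetric])
  have w_b0: "w i * f i b0 = w i * c + (w i)\<^sup>2" for i
    unfolding w_def by (auto simp: power2_eq_square algebra_simps max_def)
  show ?thesis
  proof (intro bexI[OF _ a(1)] ballI)
    fix b assume "b \<in> B"
    have "c * sum w F < c * sum w F + (\<Sum>i\<in>F. (w i)\<^sup>2)" using sum_w by simp
    also have "\<dots> = (\<Sum>i\<in>F. w i * f i b0)"
      by (simp add: w_b0 sum.distrib sum_distrib_left mult.commute)
    also have "\<dots> \<le> (\<Sum>i\<in>F. w i * f i b)"
      using first_order[OF \<open>b \<in> B\<close>] by (simp add: algebra_simps sum_subtractf)
    finally have "c < (\<Sum>i\<in>F. w i * f i b) / sum w F" using sum_w by (simp add: field_simps)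
    also have "\<dots> = (\<Sum>i\<in>F. w i / sum w F * f i b)" by (simp add: sum_divide_distrib)
    also have "\<dots> \<le> f a b" using a(2)[OF \<open>b \<in> B\<close>] .
    finally show "c < f a b" .
  qed
qed

lemma concavelike_convexlike_uniform_ge:
  fixes f :: "'a::t2_space \<Rightarrow> 'b::topological_space \<Rightarrow> real"
  assumes A: "compact A" "A \<noteq> {}" and B: "compact B" "B \<noteq> {}"
    and contA: "\<And>b. b \<in> B \<Longrightarrow> continuous_on A (\<lambda>a. f a b)"
    and contB: "\<And>a. a \<in> A \<Longrightarrow> continuous_on B (f a)"
    and concave: "concavelike_on A B f" and convex: "convexlike_on A B f"
    and cover: "\<And>c b. c < v \<Longrightarrow> b \<in> B \<Longrightarrow> \<exists>a\<in>A. c < f a b"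
  shows "\<exists>a\<in>A. \<forall>b\<in>B. v \<le> f a b"
proof -
  define S where "S c = A \<inter> (\<Inter>b\<in>B. A \<inter> (\<lambda>a. f a b) -` {c..})" for c
  have S_closed: "closed (S c)" for c
    unfolding S_def using compact_imp_closed[OF A(1)]
    by (intro closed_Int closed_INT ballI continuous_closed_preimage contA) auto
  have S_nonempty: "S c \<noteq> {}" if "c < v" for c
  proof -
    obtain a where "a \<in> A" "\<forall>b\<in>B. c < f a b"
      using concavelike_convexlike_uniform_gt[OF B contB concave convex cover[OF \<open>c < v\<close>]] by blast
    then have "a \<in> S c" unfolding S_def by (auto intro: less_imp_le)
    then show ?thesis by blast
  qed
  have S_antimono: "S c' \<subseteq> S c" if "c \<le> c'" for c c'
    using that unfolding S_def by auto
  have S_sub: "S c \<subseteq> A" for c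
    unfolding S_def by blast
  have "A \<inter> (\<Inter>c\<in>{..<v}. S c) \<noteq> {}"
  proof (rule compact_imp_fip_image[OF A(1) S_closed])
    fix I assume I: "finite I" "I \<subseteq> {..<v}"
    show "A \<inter> (\<Inter>c\<in>I. S c) \<noteq> {}"
    proof (cases "I = {}")
      case False
      then have "Max I \<in> I" using I(1) by simp
      then have "S (Max I) \<noteq> {}" using I(2) S_nonempty by blast
      moreover have "S (Max I) \<subseteq> A \<inter> (\<Inter>c\<in>I. S c)"
        using S_sub S_antimono I(1) by (simp add: le_INF_iff)
      ultimately show ?thesis by blast
    qed (use A(2) in simp)
  qed
  then obtain a where a: "a \<in> A" "\<And>c. c < v \<Longrightarrow> a \<in> S c" by blast
  have "v \<le> f a b" if "b \<in> B" for b
  proof (rule dense_le)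
    fix c assume "c < v"
    then show "c \<le> f a b" using a(2) \<open>b \<in> B\<close> unfolding S_def by blast
  qed
  with a(1) show ?thesis by blast
qed

definition saddle_point :: "'a set \<Rightarrow> 'b set \<Rightarrow> ('a \<Rightarrow> 'b \<Rightarrow> real) \<Rightarrow> 'a \<Rightarrow> 'b \<Rightarrow> bool" where
  "saddle_point A B f a b \<longleftrightarrow>
     a \<in> A \<and> b \<in> B \<and> (\<forall>a'\<in>A. f a' b \<le> f a b) \<and> (\<forall>b'\<in>B. f a b \<le> f a b')"

lemma bdd_below_continuous_compact:
  fixes g :: "'b::topological_space \<Rightarrow> real"
  shows "compact B \<Longrightarrow> continuous_on B g \<Longrightarrow> bdd_below (g ` B)"
  by (intro bounded_imp_bdd_below compact_imp_bounded compact_continuous_image)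

lemma bdd_above_continuous_compact:
  fixes g :: "'b::topological_space \<Rightarrow> real"
  shows "compact B \<Longrightarrow> continuous_on B g \<Longrightarrow> bdd_above (g ` B)"
  by (intro bounded_imp_bdd_above compact_imp_bounded compact_continuous_image)

theorem concavelike_convexlike_saddle_point:
  fixes f :: "'a::t2_space \<Rightarrow> 'b::t2_space \<Rightarrow> real"
  assumes A: "compact A" "A \<noteq> {}" and B: "compact B" "B \<noteq> {}"
    and contA: "\<And>b. b \<in> B \<Longrightarrow> continuous_on A (\<lambda>a. f a b)"
    and contB: "\<And>a. a \<in> A \<Longrightarrow> continuous_on B (f a)"
    and concave: "concavelike_on A B f" and convex: "convexlike_on A B f"
  obtains a b where "saddle_point A B f a b"
proof -
  define v where "v = (INF b\<in>B. SUP a\<in>A. f a b)"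
  have bddA: "bdd_above ((\<lambda>a. f a b) ` A)" if "b \<in> B" for b
    using bdd_above_continuous_compact[OF A(1) contA[OF that]] .
  obtain a0 where a0: "a0 \<in> A" using A(2) by blast
  obtain m where m: "\<And>b. b \<in> B \<Longrightarrow> m \<le> f a0 b"
    using bdd_below_continuous_compact[OF B(1) contB[OF a0]] by (auto simp: bdd_below_def)
  have "m \<le> (SUP a\<in>A. f a b)" if "b \<in> B" for b
    using m[OF that] cSUP_upper[OF a0 bddA[OF that]] by linarith
  then have bdd_SUP: "bdd_below ((\<lambda>b. SUP a\<in>A. f a b) ` B)" by (auto simp: bdd_below_def)
  have "\<exists>a\<in>A. \<forall>b\<in>B. v \<le> f a b"
  proof (rule concavelike_convexlike_uniform_ge[OF A B contA contB concave convex])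
    fix c b assume "c < v" "b \<in> B"
    then have "c < (SUP a\<in>A. f a b)"
      using cINF_lower[OF bdd_SUP \<open>b \<in> B\<close>] unfolding v_def by linarith
    then show "\<exists>a\<in>A. c < f a b" using less_cSUP_iff[OF A(2) bddA[OF \<open>b \<in> B\<close>]] by blast
  qed
  then obtain a where a: "a \<in> A" "\<And>b. b \<in> B \<Longrightarrow> v \<le> f a b" by blast
  have "\<exists>b\<in>B. \<forall>a\<in>A. - v \<le> - f a b"
  proof (rule concavelike_convexlike_uniform_ge[OF B A])
    show "concavelike_on B A (\<lambda>b a. - f a b)"
      using convex by (simp add: convexlike_on_iff_concavelike_on_uminus)
    show "convexlike_on B A (\<lambda>b a. - f a b)"
      using concave by (simp add: convexlike_on_iff_concavelike_on_uminus)
    fix c a assume "c < - v" "a \<in> A"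
    then have "(INF b\<in>B. SUP a\<in>A. f a b) < - c" unfolding v_def by linarith
    then obtain b where "b \<in> B" "(SUP a\<in>A. f a b) < - c"
      using cINF_less_iff[OF B(2) bdd_SUP] by blast
    moreover have "f a b \<le> (SUP a\<in>A. f a b)"
      using cSUP_upper[OF \<open>a \<in> A\<close> bddA[OF \<open>b \<in> B\<close>]] .
    ultimately show "\<exists>b\<in>B. c < - f a b" by force
  qed (use contA contB in \<open>auto intro: continuous_intros\<close>)
  then obtain b where b: "b \<in> B" "\<And>a. a \<in> A \<Longrightarrow> f a b \<le> v" by auto
  have "v = f a b" using a(2)[OF b(1)] b(2)[OF a(1)] by simp
  then have "saddle_point A B f a b"
    unfolding saddle_point_def using a b by auto
  then show thesis by (rule that)
qed

lemma saddle_point_SUP_INF: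
  assumes saddle: "saddle_point A B f a b"
    and bddB: "\<And>a. a \<in> A \<Longrightarrow> bdd_below (f a ` B)"
    and bddA: "\<And>b. b \<in> B \<Longrightarrow> bdd_above ((\<lambda>a. f a b) ` A)"
  shows "(INF b'\<in>B. f a b') = (SUP a'\<in>A. INF b'\<in>B. f a' b')"
    and "(SUP a'\<in>A. f a' b) = (INF b'\<in>B. SUP a'\<in>A. f a' b')"
    and "(SUP a\<in>A. INF b\<in>B. f a b) = (INF b\<in>B. SUP a\<in>A. f a b)"
proof -
  have ab: "a \<in> A" "b \<in> B"
      "\<And>a'. a' \<in> A \<Longrightarrow> f a' b \<le> f a b" "\<And>b'. b' \<in> B \<Longrightarrow> f a b \<le> f a b'"
    using saddle unfolding saddle_point_def by auto
  have INF_a: "(INF b'\<in>B. f a b') = f a b" using ab by (intro cInf_eq_minimum) auto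
  have SUP_b: "(SUP a'\<in>A. f a' b) = f a b" using ab by (intro cSup_eq_maximum) auto
  have "(INF b'\<in>B. f a' b') \<le> f a b" if "a' \<in> A" for a'
    using cINF_lower[OF bddB[OF that] ab(2)] ab(3)[OF that] by linarith
  then have lower: "(SUP a'\<in>A. INF b'\<in>B. f a' b') = f a b"
    using image_eqI[of _ "\<lambda>a'. INF b'\<in>B. f a' b'", OF INF_a[symmetric] ab(1)]
    by (intro cSup_eq_maximum) auto
  have "f a b \<le> (SUP a'\<in>A. f a' b')" if "b' \<in> B" for b'
    using cSUP_upper[OF ab(1) bddA[OF that]] ab(4)[OF that] by linarith
  then have upper: "(INF b'\<in>B. SUP a'\<in>A. f a' b') = f a b"
    using image_eqI[of _ "\<lambda>b'. SUP a'\<in>A. f a' b'", OF SUP_b[symmetric] ab(2)]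
    by (intro cInf_eq_minimum) auto
  show "(INF b'\<in>B. f a b') = (SUP a'\<in>A. INF b'\<in>B. f a' b')" using INF_a lower by simp
  show "(SUP a'\<in>A. f a' b) = (INF b'\<in>B. SUP a'\<in>A. f a' b')" using SUP_b upper by simp
  show "(SUP a\<in>A. INF b\<in>B. f a b) = (INF b\<in>B. SUP a\<in>A. f a b)" using lower upper by simp
qed

lemma continuous_attains_INF:
  fixes g :: "'b::topological_space \<Rightarrow> real"
  assumes "compact B" "B \<noteq> {}" "continuous_on B g"
  shows "\<exists>b\<in>B. g b = (INF b'\<in>B. g b')"
proof -
  obtain b where "b \<in> B" "\<And>b'. b' \<in> B \<Longrightarrow> g b \<le> g b'"
    using continuous_attains_inf[OF assms] by blast
  then show ?thesis by (intro bexI[of _ b] cInf_eq_minimum[symmetric]) auto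
qed

lemma continuous_attains_SUP:
  fixes g :: "'a::topological_space \<Rightarrow> real"
  assumes "compact A" "A \<noteq> {}" "continuous_on A g"
  shows "\<exists>a\<in>A. g a = (SUP a'\<in>A. g a')"
proof -
  obtain a where "a \<in> A" "\<And>a'. a' \<in> A \<Longrightarrow> g a' \<le> g a"
    using continuous_attains_sup[OF assms] by blast
  then show ?thesis by (intro bexI[of _ a] cSup_eq_maximum[symmetric]) auto
qed

theorem concavelike_convexlike_minimax:
  fixes f :: "'a::t2_space \<Rightarrow> 'b::t2_space \<Rightarrow> real"
  assumes A: "compact A" "A \<noteq> {}" and B: "compact B" "B \<noteq> {}"
    and contA: "\<And>b. b \<in> B \<Longrightarrow> continuous_on A (\<lambda>a. f a b)"
    and contB: "\<And>a. a \<in> A \<Longrightarrow> continuous_on B (f a)"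
    and concave: "concavelike_on A B f" and convex: "convexlike_on A B f"
  shows "(\<forall>a\<in>A. \<exists>b\<in>B. f a b = (INF b'\<in>B. f a b'))
       \<and> (\<forall>b\<in>B. \<exists>a\<in>A. f a b = (SUP a'\<in>A. f a' b))
       \<and> (\<exists>a\<in>A. (INF b\<in>B. f a b) = (SUP a'\<in>A. INF b\<in>B. f a' b))
       \<and> (\<exists>b\<in>B. (SUP a\<in>A. f a b) = (INF b'\<in>B. SUP a\<in>A. f a b'))
       \<and> (SUP a\<in>A. INF b\<in>B. f a b) = (INF b\<in>B. SUP a\<in>A. f a b)"
proof -
  obtain a b where saddle: "saddle_point A B f a b"
    using concavelike_convexlike_saddle_point[OF A B contA contB concave convex] .
  then have "a \<in> A" "b \<in> B" unfolding saddle_point_def by auto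
  moreover note SUP_INF = saddle_point_SUP_INF[OF saddle
      bdd_below_continuous_compact[OF B(1) contB] bdd_above_continuous_compact[OF A(1) contA]]
  ultimately show ?thesis
    using continuous_attains_INF[OF B contB] continuous_attains_SUP[OF A contA] by blast
qed

section \<open>The coupling game\<close>

lemma continuous_on_coordinate3:
  "continuous_on S (\<lambda>a :: 'i \<Rightarrow> 'j \<Rightarrow> 'k \<Rightarrow> 'b::topological_space. a i j k)"
  using continuous_on_product_then_coordinatewise[OF
      continuous_on_product_then_coordinatewise[OF
        continuous_on_product_then_coordinatewise[OF continuous_on_id]]] .

lemma compact_unit_cube_fun3:
  "compact {a :: 'i \<Rightarrow> 'j \<Rightarrow> 'k \<Rightarrow> real. \<forall>i j k. 0 \<le> a i j k \<and> a i j k \<le> 1}"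
proof -
  have compact_PiE_UNIV: "compact (PiE UNIV S)" if "\<And>i. compact (S i)"
    for S :: "'c \<Rightarrow> 'd::topological_space set"
    using that by (simp flip: euclidean_product_topology compactin_euclidean_iff add: compactin_PiE)
  have "{a :: 'i \<Rightarrow> 'j \<Rightarrow> 'k \<Rightarrow> real. \<forall>i j k. 0 \<le> a i j k \<and> a i j k \<le> 1}
      = PiE UNIV (\<lambda>_. PiE UNIV (\<lambda>_. PiE UNIV (\<lambda>_. {0..1})))"
    by (auto simp: PiE_UNIV_domain Pi_iff)
  then show ?thesis by (simp add: compact_PiE_UNIV)
qed

lemma setA_eq:
  "setA W V = {a. (\<forall>x y yh. 0 \<le> a x y yh) \<and> (\<forall>x. (\<Sum>p\<in>UNIV. a x (fst p) (snd p)) = 1)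
     \<and> (\<forall>x y. (\<Sum>yh\<in>UNIV. a x y yh) = W x y) \<and> (\<forall>x yh. (\<Sum>y\<in>UNIV. a x y yh) = V x yh)}"
  by (auto simp: setA_def is_cond_pmf_def is_pmf_def split_beta)

lemma setB_eq:
  "setB P1 V = {b. (\<forall>x yh x2. 0 \<le> b x yh x2) \<and> (\<forall>x yh. (\<Sum>x2\<in>UNIV. b x yh x2) = 1)
     \<and> (\<forall>yh x. (\<Sum>x1\<in>UNIV. P1 x1 * V x1 yh * b x1 yh x) = P1 x * V x yh)}"
  by (auto simp: setB_def is_cond_pmf_def is_pmf_def split_beta)

lemma closed_setA: "closed (setA W V)"
  unfolding setA_eq
  by (intro closed_Collect_conj closed_Collect_all closed_Collect_le closed_Collect_eq
      continuous_intros continuous_on_coordinate3)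

lemma closed_setB: "closed (setB P1 V)"
  unfolding setB_eq
  by (intro closed_Collect_conj closed_Collect_all closed_Collect_le closed_Collect_eq
      continuous_intros continuous_on_coordinate3)

lemma compact_setA: "compact (setA W V)"
proof -
  have "a x y yh \<le> 1" if "a \<in> setA W V" for a x y yh
  proof -
    have "a x (fst (y, yh)) (snd (y, yh)) \<le> (\<Sum>p\<in>UNIV. a x (fst p) (snd p))"
      using that unfolding setA_eq by (intro member_le_sum) auto
    then show ?thesis using that unfolding setA_eq by auto
  qed
  then have "setA W V \<subseteq> {a. \<forall>x y yh. 0 \<le> a x y yh \<and> a x y yh \<le> 1}"
    unfolding setA_eq by blast
  then show ?thesis
    using compact_Int_closed[OF compact_unit_cube_fun3 closed_setA[of W V]] by (simp add: Int_absorb1)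
qed

lemma compact_setB: "compact (setB P1 V)"
proof -
  have "b x yh x2 \<le> 1" if "b \<in> setB P1 V" for b x yh x2
  proof -
    have "b x yh x2 \<le> (\<Sum>x'\<in>UNIV. b x yh x')"
      using that unfolding setB_eq by (intro member_le_sum) auto
    then show ?thesis using that unfolding setB_eq by auto
  qed
  then have "setB P1 V \<subseteq> {b. \<forall>x yh x2. 0 \<le> b x yh x2 \<and> b x yh x2 \<le> 1}"
    unfolding setB_eq by blast
  then show ?thesis
    using compact_Int_closed[OF compact_unit_cube_fun3 closed_setB[of P1 V]] by (simp add: Int_absorb1)
qed

lemma product_coupling_in_setA:
  assumes "is_cond_pmf W" "is_cond_pmf V"
  shows "(\<lambda>x y yh. W x y * V x yh) \<in> setA W V"
proof -
  have W: "\<And>x y. 0 \<le> W x y" "\<And>x. (\<Sum>y\<in>UNIV. W x y) = 1"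
    and V: "\<And>x y. 0 \<le> V x y" "\<And>x. (\<Sum>y\<in>UNIV. V x y) = 1"
    using assms by (auto simp: is_cond_pmf_def is_pmf_def)
  have "(\<Sum>p\<in>UNIV. W x (fst p) * V x (snd p)) = (\<Sum>y\<in>UNIV. W x y) * (\<Sum>yh\<in>UNIV. V x yh)" for x
    by (simp add: sum_product sum.cartesian_product' flip: UNIV_Times_UNIV)
  then show ?thesis
    unfolding setA_eq using W V by (simp add: sum_distrib_left[symmetric] sum_distrib_right[symmetric])
qed

lemma identity_channel_in_setB: "(\<lambda>x yh x2. if x2 = x then 1 else 0) \<in> setB P1 V"
  unfolding setB_eq by (auto simp: if_distrib cong: if_cong)

lemma sum_convex_comb:
  fixes f g :: "'a \<Rightarrow> 'b::comm_ring_1"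
  shows "(\<Sum>x\<in>S. (1 - t) * f x + t * g x) = (1 - t) * sum f S + t * sum g S"
  by (simp add: sum.distrib sum_distrib_left)

lemma convex_comb_in_setA:
  assumes "a0 \<in> setA W V" "a1 \<in> setA W V" "0 \<le> t" "t \<le> 1"
  shows "(\<lambda>x y yh. (1 - t) * a0 x y yh + t * a1 x y yh) \<in> setA W V"
proof -
  have "0 \<le> (1 - t) * a0 x y yh + t * a1 x y yh" for x y yh
    using assms unfolding setA_eq by (intro add_nonneg_nonneg mult_nonneg_nonneg) auto
  with assms show ?thesis unfolding setA_eq mem_Collect_eq sum_convex_comb
    by (auto simp: left_diff_distrib)
qed

lemma convex_comb_in_setB:
  assumes "b0 \<in> setB P1 V" "b1 \<in> setB P1 V" "0 \<le> t" "t \<le> 1"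
  shows "(\<lambda>x yh x2. (1 - t) * b0 x yh x2 + t * b1 x yh x2) \<in> setB P1 V"
proof -
  have "0 \<le> (1 - t) * b0 x yh x2 + t * b1 x yh x2" for x yh x2
    using assms unfolding setB_eq by (intro add_nonneg_nonneg mult_nonneg_nonneg) auto
  moreover have summand: "P1 x1 * V x1 yh * ((1 - t) * b0 x1 yh x2 + t * b1 x1 yh x2)
      = (1 - t) * (P1 x1 * V x1 yh * b0 x1 yh x2) + t * (P1 x1 * V x1 yh * b1 x1 yh x2)"
    for x1 yh x2 by (simp add: algebra_simps)
  ultimately show ?thesis using assms unfolding setB_eq mem_Collect_eq summand sum_convex_comb
    by (auto simp: left_diff_distrib)
qed

lemma expq_convex_comb_left:
  "expq q P1 (\<lambda>x y yh. (1 - t) * a0 x y yh + t * a1 x y yh) b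
     = (1 - t) * expq q P1 a0 b + t * expq q P1 a1 b"
proof -
  have "q x2 y * P1 x1 * ((1 - t) * a0 x1 y yh + t * a1 x1 y yh) * b x1 yh x2
      = (1 - t) * (q x2 y * P1 x1 * a0 x1 y yh * b x1 yh x2)
        + t * (q x2 y * P1 x1 * a1 x1 y yh * b x1 yh x2)" for x1 x2 y yh
    by (simp add: algebra_simps)
  then show ?thesis unfolding expq_def by (simp only: sum_convex_comb)
qed

lemma expq_convex_comb_right:
  "expq q P1 a (\<lambda>x yh x2. (1 - t) * b0 x yh x2 + t * b1 x yh x2)
     = (1 - t) * expq q P1 a b0 + t * expq q P1 a b1"
proof -
  have "q x2 y * P1 x1 * a x1 y yh * ((1 - t) * b0 x1 yh x2 + t * b1 x1 yh x2)
      = (1 - t) * (q x2 y * P1 x1 * a x1 y yh * b0 x1 yh x2)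
        + t * (q x2 y * P1 x1 * a x1 y yh * b1 x1 yh x2)" for x1 x2 y yh
    by (simp add: algebra_simps)
  then show ?thesis unfolding expq_def by (simp only: sum_convex_comb)
qed

lemma concavelike_on_expq: "concavelike_on (setA W V) (setB P1 V) (expq q P1)"
  unfolding concavelike_on_def
proof (intro ballI allI impI)
  fix a0 a1 and t :: real assume mix: "a0 \<in> setA W V" "a1 \<in> setA W V" "0 \<le> t \<and> t \<le> 1"
  show "\<exists>a\<in>setA W V. \<forall>b\<in>setB P1 V.
      (1 - t) * expq q P1 a0 b + t * expq q P1 a1 b \<le> expq q P1 a b"
  proof (rule bexI)
    show "(\<lambda>x y yh. (1 - t) * a0 x y yh + t * a1 x y yh) \<in> setA W V"
      using mix by (intro convex_comb_in_setA) auto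
  qed (simp add: expq_convex_comb_left)
qed

lemma convexlike_on_expq: "convexlike_on (setA W V) (setB P1 V) (expq q P1)"
  unfolding convexlike_on_def
proof (intro ballI allI impI)
  fix b0 b1 and t :: real assume mix: "b0 \<in> setB P1 V" "b1 \<in> setB P1 V" "0 \<le> t \<and> t \<le> 1"
  show "\<exists>b\<in>setB P1 V. \<forall>a\<in>setA W V.
      expq q P1 a b \<le> (1 - t) * expq q P1 a b0 + t * expq q P1 a b1"
  proof (rule bexI)
    show "(\<lambda>x yh x2. (1 - t) * b0 x yh x2 + t * b1 x yh x2) \<in> setB P1 V"
      using mix by (intro convex_comb_in_setB) auto
  qed (simp add: expq_convex_comb_right)
qed

lemma continuous_on_expq_left: "continuous_on S (\<lambda>a. expq q P1 a b)"
  unfolding expq_def by (intro continuous_intros continuous_on_coordinate3)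

lemma continuous_on_expq_right: "continuous_on S (expq q P1 a)"
  unfolding expq_def by (intro continuous_intros continuous_on_coordinate3)

theorem lemma1:
  fixes q :: "'x::finite \<Rightarrow> 'y::finite \<Rightarrow> real"
    and P1 :: "'x \<Rightarrow> real"
    and W V :: "'x \<Rightarrow> 'y \<Rightarrow> real"
  assumes "is_pmf P1" and "is_cond_pmf W" and "is_cond_pmf V"
  shows "(\<forall>a\<in>setA W V. \<exists>b\<in>setB P1 V.
            expq q P1 a b = (INF b'\<in>setB P1 V. expq q P1 a b'))
       \<and> (\<forall>b\<in>setB P1 V. \<exists>a\<in>setA W V.
            expq q P1 a b = (SUP a'\<in>setA W V. expq q P1 a' b))
       \<and> (\<exists>a\<in>setA W V. (INF b\<in>setB P1 V. expq q P1 a b)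
            = (SUP a'\<in>setA W V. INF b\<in>setB P1 V. expq q P1 a' b))
       \<and> (\<exists>b\<in>setB P1 V. (SUP a\<in>setA W V. expq q P1 a b)
            = (INF b'\<in>setB P1 V. SUP a\<in>setA W V. expq q P1 a b'))
       \<and> (SUP a\<in>setA W V. INF b\<in>setB P1 V. expq q P1 a b)
          = (INF b\<in>setB P1 V. SUP a\<in>setA W V. expq q P1 a b)"
proof -
  have "setA W V \<noteq> {}" using product_coupling_in_setA[OF assms(2,3)] by blast
  moreover have "setB P1 V \<noteq> {}" using identity_channel_in_setB by blast
  ultimately show ?thesis
    using concavelike_convexlike_minimax[where f = "expq q P1", OF compact_setA _ compact_setB _
        continuous_on_expq_left continuous_on_expq_right concavelike_on_expq convexlike_on_expq]
    by blast
qed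

end
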